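(* Let $D$ be a strongly connected digraph of order $n\ge 2$ and girth $g$. Then $\chi_A(D)\le \left\lceil\frac{n}{g-1}\right\rceil$.
   Context: Digraphs are finite and loopless; cycles are directed. Girth is the length of a shortest directed cycle. $\chi_A(D)$ is the minimum number of colors in a vertex coloring of $D$ in which every color class induces an acyclic subdigraph. *)

theory Defs
  imports Complex_Main
begin

definition digraph :: "'a set \<Rightarrow> ('a \<times> 'a) set \<Rightarrow> bool" where
  "digraph V E \<longleftrightarrow> finite V \<and> E \<subseteq> V \<times> V \<and> (\<forall>v. (v, v) \<notin> E)"

definition strongly_connected :: "'a set \<Rightarrow> ('a \<times> 'a) set \<Rightarrow> bool" where
  "strongly_connected V E \<longleftrightarrow> (\<forall>u\<in>V. \<forall>v\<in>V. (u, v) \<in> E\<^sup>*)"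

definition is_dicycle :: "('a \<times> 'a) set \<Rightarrow> 'a list \<Rightarrow> bool" where
  "is_dicycle E cs \<longleftrightarrow> cs \<noteq> [] \<and> distinct cs \<and>
     (\<forall>i < length cs. (cs ! i, cs ! ((i + 1) mod length cs)) \<in> E)"

definition girth :: "('a \<times> 'a) set \<Rightarrow> nat" where
  "girth E = (LEAST k. \<exists>cs. is_dicycle E cs \<and> length cs = k)"

definition acyclic_coloring :: "'a set \<Rightarrow> ('a \<times> 'a) set \<Rightarrow> nat \<Rightarrow> ('a \<Rightarrow> nat) \<Rightarrow> bool" where
  "acyclic_coloring V E k c \<longleftrightarrow> c ` V \<subseteq> {..<k} \<and>
     (\<forall>i < k. acyclic (E \<inter> ({v\<in>V. c v = i} \<times> {v\<in>V. c v = i})))"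

definition dichromatic_number :: "'a set \<Rightarrow> ('a \<times> 'a) set \<Rightarrow> nat" where
  "dichromatic_number V E = (LEAST k. \<exists>c. acyclic_coloring V E k c)"

end

theory Submission
  imports Defs "HOL-Library.Transitive_Closure_Table"
begin

text \<open>
  Number the vertices 0, ..., n-1 and colour vertex number j with j div (g - 1).
  Every colour class then has at most g - 1 vertices, and a digraph on fewer than g
  vertices of D cannot contain a directed cycle of D; so each class is acyclic and
  \<open>\<lceil>n / (g - 1)\<rceil>\<close> colours suffice. Strong connectivity with n \<ge> 2 only serves to
  guarantee that D has a cycle at all, so that g is a genuine cycle length, at least 2.
\<close>

lemma is_dicycle_rtrancl_path:
  assumes path: "rtrancl_path (\<lambda>a b. (a, b) \<in> R) x xs y"
    and dist: "distinct (x # xs)" and closing: "(y, x) \<in> R"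
  shows "is_dicycle R (x # xs)"
  unfolding is_dicycle_def
proof (intro conjI allI impI)
  fix i assume i: "i < length (x # xs)"
  show "((x # xs) ! i, (x # xs) ! ((i + 1) mod length (x # xs))) \<in> R"
  proof (cases "i < length xs")
    case True
    then show ?thesis using rtrancl_path_nth[OF path True] by simp
  next
    case False
    then have "i = length xs" using i by simp
    have "(x # xs) ! length xs = last (x # xs)"
      by (metis last_conv_nth length_Cons list.distinct(1) diff_Suc_1)
    also have "\<dots> = y"
      using rtrancl_path_last[OF path] path by (cases xs) (auto elim: rtrancl_path.cases)
    finally show ?thesis using closing \<open>i = length xs\<close> by simp
  qed
qed (use dist in auto)

lemma dicycle_if_trancl_loop:
  assumes "(x, x) \<in> R\<^sup>+"
  obtains cs where "is_dicycle R cs"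
proof -
  obtain y where "(x, y) \<in> R\<^sup>*" and closing: "(y, x) \<in> R"
    using tranclD2[OF assms] by blast
  then have "(\<lambda>a b. (a, b) \<in> R)\<^sup>*\<^sup>* x y" unfolding rtrancl_def by simp
  then obtain xs where "rtrancl_path (\<lambda>a b. (a, b) \<in> R) x xs y"
    unfolding rtranclp_eq_rtrancl_path by blast
  then obtain xs' where "rtrancl_path (\<lambda>a b. (a, b) \<in> R) x xs' y" "distinct (x # xs')"
    by (rule rtrancl_path_distinct)
  then have "is_dicycle R (x # xs')" using closing by (rule is_dicycle_rtrancl_path)
  then show thesis by (rule that)
qed

lemma dicycle_if_strongly_connected:
  assumes "strongly_connected V E" and "card V \<ge> 2"
  obtains cs where "is_dicycle E cs"
proof -
  have "card V > 0" using assms(2) by simp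
  then have "finite V" by (rule card_ge_0_finite)
  moreover have "\<not> card V \<le> Suc 0" using assms(2) by simp
  ultimately obtain u v where "u \<in> V" "v \<in> V" "u \<noteq> v"
    using card_le_Suc0_iff_eq by blast
  then have "(u, v) \<in> E\<^sup>*" "(v, u) \<in> E\<^sup>*"
    using assms(1) unfolding strongly_connected_def by blast+
  with \<open>u \<noteq> v\<close> have "(u, v) \<in> E\<^sup>+" by (blast dest: rtranclD)
  then have "(u, u) \<in> E\<^sup>+" using \<open>(v, u) \<in> E\<^sup>*\<close> by (rule trancl_rtrancl_trancl)
  then show thesis using that by (rule dicycle_if_trancl_loop)
qed

lemma length_dicycle_ge_2:
  assumes "is_dicycle E cs" and "\<forall>v. (v, v) \<notin> E"
  shows "length cs \<ge> 2"
proof (rule ccontr)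
  assume "\<not> length cs \<ge> 2"
  moreover have "length cs > 0" using assms(1) unfolding is_dicycle_def by simp
  ultimately have "length cs = 1" by linarith
  then have "(cs ! 0, cs ! 0) \<in> E" using assms(1) unfolding is_dicycle_def by force
  with assms(2) show False by blast
qed

lemma girth_le_length_dicycle: "is_dicycle E cs \<Longrightarrow> girth E \<le> length cs"
  unfolding girth_def by (rule Least_le) blast

lemma girth_attained:
  assumes "is_dicycle E cs"
  obtains cs' where "is_dicycle E cs'" and "length cs' = girth E"
proof -
  have "\<exists>cs'. is_dicycle E cs' \<and> length cs' = girth E"
    unfolding girth_def by (rule LeastI_ex) (use assms in blast)
  then show thesis using that by blast
qed

lemma girth_ge_2:
  assumes "is_dicycle E cs" and "\<forall>v. (v, v) \<notin> E"
  shows "girth E \<ge> 2"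
  using assms girth_attained length_dicycle_ge_2 by metis

lemma set_dicycle_restrict_subset:
  assumes "is_dicycle (E \<inter> (S \<times> S)) cs"
  shows "set cs \<subseteq> S"
proof
  fix v assume "v \<in> set cs"
  then obtain i where "i < length cs" "cs ! i = v" by (metis in_set_conv_nth)
  with assms show "v \<in> S" unfolding is_dicycle_def by blast
qed

text \<open>No cycle hypothesis is needed: without cycles girth E is the junk value 0.\<close>

lemma acyclic_restrict_if_card_less_girth:
  assumes "finite S" and "card S < girth E"
  shows "acyclic (E \<inter> (S \<times> S))"
proof (rule ccontr)
  assume "\<not> acyclic (E \<inter> (S \<times> S))"
  then obtain x where "(x, x) \<in> (E \<inter> (S \<times> S))\<^sup>+" unfolding acyclic_def by blast
  then obtain cs where cs: "is_dicycle (E \<inter> (S \<times> S)) cs" by (rule dicycle_if_trancl_loop)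
  then have "is_dicycle E cs" unfolding is_dicycle_def by simp
  then have "girth E \<le> length cs" by (rule girth_le_length_dicycle)
  also have "length cs = card (set cs)"
    using cs unfolding is_dicycle_def by (simp add: distinct_card)
  also have "\<dots> \<le> card S"
    using card_mono[OF assms(1) set_dicycle_restrict_subset[OF cs]] .
  finally show False using assms(2) by simp
qed

lemma mem_div_block:
  fixes a d :: nat
  assumes "d > 0"
  shows "a \<in> {a div d * d..<a div d * d + d}"
proof -
  have "a mod d < d" using assms by simp
  moreover have "a div d * d + a mod d = a" by (rule div_mult_mod_eq)
  ultimately show ?thesis unfolding atLeastLessThan_iff by linarith
qed

lemma div_less_nat_ceiling_divide:
  assumes "a < n" and "d > 0"
  shows "a div d < nat \<lceil>real n / real d\<rceil>"
proof -
  have "real (a div d) * real d < real n"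
    using assms(1) div_times_less_eq_dividend[of a d] by (metis le_less_trans of_nat_less_iff of_nat_mult)
  then have "real (a div d) < real n / real d"
    using assms(2) by (simp add: field_simps)
  then show ?thesis by linarith
qed

lemma int_le_ceiling_divide_if_le_nat:
  assumes "m \<le> nat \<lceil>real n / real d\<rceil>"
  shows "int m \<le> \<lceil>real n / real d\<rceil>"
proof -
  have "0 \<le> real n / real d" by simp
  then have "0 \<le> \<lceil>real n / real d\<rceil>" unfolding zero_le_ceiling by linarith
  with assms show ?thesis by (simp add: le_nat_iff)
qed

lemma coloring_with_small_classes:
  assumes "finite V" and "d > 0"
  obtains c :: "'a \<Rightarrow> nat"
  where "c ` V \<subseteq> {..<nat \<lceil>real (card V) / real d\<rceil>}"
    and "\<And>i. card {v \<in> V. c v = i} \<le> d"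
proof -
  obtain h where h: "bij_betw h V {0..<card V}"
    using ex_bij_betw_finite_nat[OF assms(1)] by blast
  define c where "c v = h v div d" for v
  have "c ` V \<subseteq> {..<nat \<lceil>real (card V) / real d\<rceil>}"
    using bij_betw_apply[OF h] div_less_nat_ceiling_divide[OF _ assms(2)]
    unfolding c_def by auto
  moreover have "card {v \<in> V. c v = i} \<le> d" for i
  proof -
    have "h ` {v \<in> V. c v = i} \<subseteq> {i * d..<i * d + d}"
      unfolding c_def using mem_div_block[OF assms(2)] by auto
    moreover have "inj_on h {v \<in> V. c v = i}"
      using h unfolding bij_betw_def by (auto intro: inj_on_subset)
    ultimately show ?thesis using card_inj_on_le[of h _ "{i * d..<i * d + d}"] by simp
  qed
  ultimately show thesis using that by blast
qed

lemma dichromatic_number_le: "acyclic_coloring V E k c \<Longrightarrow> dichromatic_number V E \<le> k"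
  unfolding dichromatic_number_def by (rule Least_le) blast

theorem mainTheorem17:
  fixes V :: "'a set" and E :: "('a \<times> 'a) set"
  assumes "digraph V E"
    and "strongly_connected V E"
    and "card V \<ge> 2"
  shows "int (dichromatic_number V E) \<le> \<lceil>real (card V) / real (girth E - 1)\<rceil>"
proof -
  have fin: "finite V" and loopless: "\<forall>v. (v, v) \<notin> E"
    using assms(1) unfolding digraph_def by auto
  obtain cs where "is_dicycle E cs"
    using assms(2,3) by (rule dicycle_if_strongly_connected)
  then have g: "girth E \<ge> 2" using loopless by (rule girth_ge_2)
  define k where "k = nat \<lceil>real (card V) / real (girth E - 1)\<rceil>"
  obtain c where range: "c ` V \<subseteq> {..<k}"
    and small: "\<And>i. card {v \<in> V. c v = i} \<le> girth E - 1"
    using coloring_with_small_classes[OF fin, of "girth E - 1"] g unfolding k_def by auto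
  have "acyclic_coloring V E k c"
    unfolding acyclic_coloring_def
  proof (intro conjI allI impI range)
    fix i
    have "finite {v \<in> V. c v = i}" using fin by simp
    moreover have "card {v \<in> V. c v = i} < girth E" using small[of i] g by linarith
    ultimately show "acyclic (E \<inter> ({v \<in> V. c v = i} \<times> {v \<in> V. c v = i}))"
      by (rule acyclic_restrict_if_card_less_girth)
  qed
  then have "dichromatic_number V E \<le> k" by (rule dichromatic_number_le)
  then show ?thesis unfolding k_def by (rule int_le_ceiling_divide_if_le_nat)
qed

end
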